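(* Let $\Pi$ be an equitative protocol for a distribution type $\tau$. Then for every run $\rho$ of $\Pi$, every card $c\in\Omega$ and every agent $P\in\mathcal A$, \[\Pr(c\in H_P\mid\rho)=\frac{|\mathrm{Poss}_{c,P}(\rho)|}{|\mathrm{Poss}(\rho)|}.\]
   Context: Let $\mathcal A$ be a finite set of agents listed in speaking order $P_0,\dots,P_m$. A distribution type is a vector $\tau=(\tau_P)_{P\in\mathcal A}$ of positive integers, $|\tau|=\sum_P\tau_P$. The deck $\Omega$ is a set of $|\tau|$ cards; a deal of type $\tau$ is a partition $H=(H_P)_P$ of $\Omega$ with $|H_P|=\tau_P$. Fix a set of tokens; a run is a finite sequence $\rho=a_0,\dots,a_n$ of tokens, $\rho_{<k}=a_0,\dots,a_{k-1}$. A protocol for $\tau$ is a function $\Pi$ assigning to every deal $H$ and run $\rho$ a set of tokens $\Pi(H,\rho)$ such that if $k$ is the remainder of $|\rho|$ modulo $m+1$ and $H_{P_k}=H'_{P_k}$, then $\Pi(H,\rho)=\Pi(H',\rho)$. An execution is a pair $(H,\rho)$ with $a_k\in\Pi(H,\rho_{<k})$ for all $k\le n$; $\rho$ is a run of $\Pi$ if some $(H,\rho)$ is an execution. $\mathrm{Poss}(\rho)$ is the set of deals $H$ with $(H,\rho)$ an execution, and $\mathrm{Poss}_{c,P}(\rho)$ the set of $H\in\mathrm{Poss}(\rho)$ with $c\in H_P$. $\Pi$ is equitative if for every run $\rho$ of $\Pi$ there is $k=k(\rho)$ with $|\Pi(H,\rho)|=k$ for all $H\in\mathrm{Poss}(\rho)$.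 Probability model: a deal $H$ is drawn uniformly at random among all deals of type $\tau$; then, starting from the empty run, while $\Pi(H,\rho)\ne\emptyset$ for the current run $\rho$, a token is drawn uniformly at random from $\Pi(H,\rho)$ and appended. The event "$\rho$" is that the first $|\rho|$ tokens produced are exactly $\rho$. *)

theory Defs
  imports Complex_Main
begin

text \<open>Agents have type 'a and are listed in speaking order by a list ag = [P_0,...,P_m]
  (distinct, nonempty).\<close>

definition is_dist_type :: "'a list \<Rightarrow> 'c set \<Rightarrow> ('a \<Rightarrow> nat) \<Rightarrow> bool" where
  "is_dist_type ag Omega tau \<longleftrightarrow> ag \<noteq> [] \<and> distinct ag \<and> finite Omega \<and>
     (\<forall>P\<in>set ag. tau P > 0) \<and> (\<Sum>P\<in>set ag. tau P) = card Omega"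

definition deals :: "'a list \<Rightarrow> 'c set \<Rightarrow> ('a \<Rightarrow> nat) \<Rightarrow> ('a \<Rightarrow> 'c set) set" where
  "deals ag Omega tau = {H. (\<forall>P\<in>set ag. H P \<subseteq> Omega \<and> card (H P) = tau P) \<and>
     (\<forall>P\<in>set ag. \<forall>Q\<in>set ag. P \<noteq> Q \<longrightarrow> H P \<inter> H Q = {}) \<and>
     (\<Union>P\<in>set ag. H P) = Omega \<and> (\<forall>P. P \<notin> set ag \<longrightarrow> H P = {})}"

text \<open>A protocol: the token set offered depends only on the hand of the agent whose turn it is.
  Token sets are finite (required for uniform drawing).\<close>
definition is_protocol :: "'a list \<Rightarrow> 'c set \<Rightarrow> ('a \<Rightarrow> nat) \<Rightarrow>
    (('a \<Rightarrow> 'c set) \<Rightarrow> 't list \<Rightarrow> 't set) \<Rightarrow> bool" where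
  "is_protocol ag Omega tau Pi \<longleftrightarrow>
     (\<forall>H\<in>deals ag Omega tau. \<forall>rho. finite (Pi H rho)) \<and>
     (\<forall>H\<in>deals ag Omega tau. \<forall>H'\<in>deals ag Omega tau. \<forall>rho.
        H (ag ! (length rho mod length ag)) = H' (ag ! (length rho mod length ag))
        \<longrightarrow> Pi H rho = Pi H' rho)"

definition is_execution :: "(('a \<Rightarrow> 'c set) \<Rightarrow> 't list \<Rightarrow> 't set) \<Rightarrow> ('a \<Rightarrow> 'c set) \<Rightarrow> 't list \<Rightarrow> bool" where
  "is_execution Pi H rho \<longleftrightarrow> (\<forall>k<length rho. rho ! k \<in> Pi H (take k rho))"

definition Poss :: "'a list \<Rightarrow> 'c set \<Rightarrow> ('a \<Rightarrow> nat) \<Rightarrow>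
    (('a \<Rightarrow> 'c set) \<Rightarrow> 't list \<Rightarrow> 't set) \<Rightarrow> 't list \<Rightarrow> ('a \<Rightarrow> 'c set) set" where
  "Poss ag Omega tau Pi rho = {H \<in> deals ag Omega tau. is_execution Pi H rho}"

definition Poss_card :: "'a list \<Rightarrow> 'c set \<Rightarrow> ('a \<Rightarrow> nat) \<Rightarrow>
    (('a \<Rightarrow> 'c set) \<Rightarrow> 't list \<Rightarrow> 't set) \<Rightarrow> 't list \<Rightarrow> 'c \<Rightarrow> 'a \<Rightarrow> ('a \<Rightarrow> 'c set) set" where
  "Poss_card ag Omega tau Pi rho c P = {H \<in> Poss ag Omega tau Pi rho. c \<in> H P}"

definition is_run :: "'a list \<Rightarrow> 'c set \<Rightarrow> ('a \<Rightarrow> nat) \<Rightarrow>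
    (('a \<Rightarrow> 'c set) \<Rightarrow> 't list \<Rightarrow> 't set) \<Rightarrow> 't list \<Rightarrow> bool" where
  "is_run ag Omega tau Pi rho \<longleftrightarrow> Poss ag Omega tau Pi rho \<noteq> {}"

definition equitative :: "'a list \<Rightarrow> 'c set \<Rightarrow> ('a \<Rightarrow> nat) \<Rightarrow>
    (('a \<Rightarrow> 'c set) \<Rightarrow> 't list \<Rightarrow> 't set) \<Rightarrow> bool" where
  "equitative ag Omega tau Pi \<longleftrightarrow>
     (\<forall>rho. is_run ag Omega tau Pi rho \<longrightarrow>
        (\<exists>k. \<forall>H\<in>Poss ag Omega tau Pi rho. card (Pi H rho) = k))"

text \<open>The joint probability that the deal is H and the first |rho| tokens
  produced are exactly rho: (1/#deals) times the product of the uniform drawing probabilities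
  1/|Pi(H, rho_<k)| if (H,rho) is an execution, and 0 otherwise.\<close>
definition joint_prob :: "'a list \<Rightarrow> 'c set \<Rightarrow> ('a \<Rightarrow> nat) \<Rightarrow>
    (('a \<Rightarrow> 'c set) \<Rightarrow> 't list \<Rightarrow> 't set) \<Rightarrow> ('a \<Rightarrow> 'c set) \<Rightarrow> 't list \<Rightarrow> real" where
  "joint_prob ag Omega tau Pi H rho =
     (if H \<in> deals ag Omega tau \<and> is_execution Pi H rho
      then (1 / real (card (deals ag Omega tau))) *
           (\<Prod>k<length rho. 1 / real (card (Pi H (take k rho))))
      else 0)"

definition prob_and_run :: "'a list \<Rightarrow> 'c set \<Rightarrow> ('a \<Rightarrow> nat) \<Rightarrow>
    (('a \<Rightarrow> 'c set) \<Rightarrow> 't list \<Rightarrow> 't set) \<Rightarrow> (('a \<Rightarrow> 'c set) \<Rightarrow> bool) \<Rightarrow> 't list \<Rightarrow> real" where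
  "prob_and_run ag Omega tau Pi E rho =
     (\<Sum>H\<in>{H \<in> deals ag Omega tau. E H}. joint_prob ag Omega tau Pi H rho)"

definition cond_prob :: "'a list \<Rightarrow> 'c set \<Rightarrow> ('a \<Rightarrow> nat) \<Rightarrow>
    (('a \<Rightarrow> 'c set) \<Rightarrow> 't list \<Rightarrow> 't set) \<Rightarrow> (('a \<Rightarrow> 'c set) \<Rightarrow> bool) \<Rightarrow> 't list \<Rightarrow> real" where
  "cond_prob ag Omega tau Pi E rho =
     prob_and_run ag Omega tau Pi E rho / prob_and_run ag Omega tau Pi (\<lambda>_. True) rho"

end

theory Submission
  imports Defs "HOL-Library.FuncSet"
begin

text \<open>In an equitative protocol every deal compatible with the run offered the same number of
  tokens at every step, so each such deal produces the run with the same probability. Hence the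
  posterior distribution on deals given the run is uniform on the possible deals, and the
  conditional probability of an event is the fraction of possible deals in which it holds.\<close>

lemma is_execution_take:
  assumes "is_execution Prot H rho"
  shows "is_execution Prot H (take k rho)"
  using assms unfolding is_execution_def by (simp add: min_def)

lemma Poss_take:
  assumes "H \<in> Poss ag Omega tau Prot rho"
  shows "H \<in> Poss ag Omega tau Prot (take k rho)"
  using assms is_execution_take unfolding Poss_def by blast

lemma finite_deals:
  assumes "finite Omega"
  shows "finite (deals ag Omega tau)"
proof -
  define A where "A = {H. (\<forall>P\<in>set ag. H P \<in> Pow Omega) \<and> (\<forall>P. P \<notin> set ag \<longrightarrow> H P = {})}"
  have "inj_on (\<lambda>H. restrict H (set ag)) A"
    unfolding A_def inj_on_def restrict_def fun_eq_iff by (metis (mono_tags, lifting) mem_Collect_eq)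
  moreover have "(\<lambda>H. restrict H (set ag)) ` A \<subseteq> PiE (set ag) (\<lambda>_. Pow Omega)"
    unfolding A_def by fastforce
  moreover have "finite (PiE (set ag) (\<lambda>_. Pow Omega))"
    using assms by (simp add: finite_PiE)
  ultimately have "finite A"
    by (meson finite_imageD finite_subset)
  moreover have "deals ag Omega tau \<subseteq> A"
    unfolding A_def deals_def by auto
  ultimately show ?thesis
    using finite_subset by blast
qed

lemma joint_prob_not_Poss:
  assumes "H \<notin> Poss ag Omega tau Prot rho"
  shows "joint_prob ag Omega tau Prot H rho = 0"
  using assms unfolding joint_prob_def Poss_def by auto

lemma joint_prob_pos:
  assumes "finite Omega" and "is_protocol ag Omega tau Prot"
    and "H \<in> Poss ag Omega tau Prot rho"
  shows "joint_prob ag Omega tau Prot H rho > 0"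
proof -
  have H: "H \<in> deals ag Omega tau" "is_execution Prot H rho"
    using assms(3) unfolding Poss_def by auto
  have "card (deals ag Omega tau) > 0"
    using H(1) finite_deals[OF assms(1)] card_gt_0_iff by blast
  moreover have "card (Prot H (take k rho)) > 0" if "k < length rho" for k
  proof -
    have "rho ! k \<in> Prot H (take k rho)"
      using H(2) that unfolding is_execution_def by auto
    moreover have "finite (Prot H (take k rho))"
      using assms(2) H(1) unfolding is_protocol_def by blast
    ultimately show ?thesis
      using card_gt_0_iff by blast
  qed
  then have "(\<Prod>k<length rho. 1 / real (card (Prot H (take k rho)))) > 0"
    by (intro prod_pos) simp
  ultimately show ?thesis
    using H unfolding joint_prob_def by simp
qed

lemma equitative_card_eq:
  assumes "equitative ag Omega tau Prot"
    and "H \<in> Poss ag Omega tau Prot rho" and "H' \<in> Poss ag Omega tau Prot rho"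
  shows "card (Prot H rho) = card (Prot H' rho)"
proof -
  have "is_run ag Omega tau Prot rho"
    using assms(2) unfolding is_run_def by blast
  then obtain m where "\<forall>H\<in>Poss ag Omega tau Prot rho. card (Prot H rho) = m"
    using assms(1) unfolding equitative_def by blast
  then show ?thesis
    using assms(2,3) by simp
qed

lemma equitative_joint_prob_eq:
  assumes "equitative ag Omega tau Prot"
    and "H \<in> Poss ag Omega tau Prot rho" and "H' \<in> Poss ag Omega tau Prot rho"
  shows "joint_prob ag Omega tau Prot H rho = joint_prob ag Omega tau Prot H' rho"
proof -
  have "card (Prot H (take k rho)) = card (Prot H' (take k rho))" for k
    using equitative_card_eq[OF assms(1) Poss_take[OF assms(2)] Poss_take[OF assms(3)]] .
  then have "(\<Prod>k<length rho. 1 / real (card (Prot H (take k rho)))) =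
        (\<Prod>k<length rho. 1 / real (card (Prot H' (take k rho))))"
    by simp
  then show ?thesis
    using assms(2,3) unfolding joint_prob_def Poss_def by auto
qed

lemma equitative_prob_and_run:
  assumes "finite Omega" and "equitative ag Omega tau Prot"
    and "H0 \<in> Poss ag Omega tau Prot rho"
  shows "prob_and_run ag Omega tau Prot E rho =
         joint_prob ag Omega tau Prot H0 rho * real (card {H \<in> Poss ag Omega tau Prot rho. E H})"
proof -
  let ?S = "Poss ag Omega tau Prot rho"
  have fin: "finite {H \<in> deals ag Omega tau. E H}"
    using finite_deals[OF assms(1), of ag tau] by (rule rev_finite_subset) blast
  have "prob_and_run ag Omega tau Prot E rho =
        (\<Sum>H\<in>{H \<in> deals ag Omega tau. E H}. if H \<in> ?S then joint_prob ag Omega tau Prot H0 rho else 0)"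
    unfolding prob_and_run_def
    by (intro sum.cong refl)
       (metis equitative_joint_prob_eq[OF assms(2) _ assms(3)] joint_prob_not_Poss)
  also have "\<dots> = (\<Sum>H\<in>{H \<in> deals ag Omega tau. E H} \<inter> ?S. joint_prob ag Omega tau Prot H0 rho)"
    using fin by (simp add: sum.If_cases)
  also have "{H \<in> deals ag Omega tau. E H} \<inter> ?S = {H \<in> ?S. E H}"
    unfolding Poss_def by blast
  finally show ?thesis
    by (simp only: sum_constant mult.commute)
qed

theorem mainTheorem4:
  fixes ag :: "'a list" and Omega :: "'c set" and tau :: "'a \<Rightarrow> nat"
    and Pi :: "('a \<Rightarrow> 'c set) \<Rightarrow> 't list \<Rightarrow> 't set"
    and rho :: "'t list" and c :: 'c and P :: 'a
  assumes "is_dist_type ag Omega tau"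
    and "is_protocol ag Omega tau Pi"
    and "equitative ag Omega tau Pi"
    and "is_run ag Omega tau Pi rho"
    and "c \<in> Omega"
    and "P \<in> set ag"
  shows "cond_prob ag Omega tau Pi (\<lambda>H. c \<in> H P) rho =
         real (card (Poss_card ag Omega tau Pi rho c P)) / real (card (Poss ag Omega tau Pi rho))"
proof -
  have fin: "finite Omega"
    using assms(1) unfolding is_dist_type_def by blast
  obtain H0 where H0: "H0 \<in> Poss ag Omega tau Pi rho"
    using assms(4) unfolding is_run_def by blast
  have "joint_prob ag Omega tau Pi H0 rho \<noteq> 0"
    using joint_prob_pos[OF fin assms(2) H0] by simp
  then show ?thesis
    unfolding cond_prob_def equitative_prob_and_run[OF fin assms(3) H0] Poss_card_def
    by simp
qed

end
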